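(* Let $f=\frac1n\sum_{z=1}^nf_z$ where each $\nabla f_z$ is $L$-Lipschitz and $\|\nabla f_z(x)\|\le l$ for all $x,z$, let $b\ge1$, $n\ge8b$, and let $\eta$ be small enough that $C=b\left[\frac{(b-\frac{\eta^2L^2n}{b}-\eta n)(1-\eta L)}{1+2\eta}-\frac{L^3\eta^2n}{2b}\right]^{-1}>0$ and $\mathbb{E}[\|\tilde x^{k+1}-\tilde x^{k}\|^2]\le C\,\mathbb{E}[f(\tilde x^{k})-f(\tilde x^{k+1})]$ for the SCSG epochs. Let $\tilde x^0$ be given, let $\tilde x^1=\tilde x^0-r\nabla f_i(\tilde x^0)$ with $i$ uniform in $[n]$, and let $\tilde x^2,\dots,\tilde x^{\mathcal{K}}$ be produced by successive SCSG epochs (see context). Suppose $\mathbb{E}[f(\tilde x^{\mathcal{K}})]-f(\tilde x^0)\ge-f_{thres}$. Then $$\mathbb{E}[\|\tilde x^{\mathcal{K}}-\tilde x^0\|^2]\le2\mathcal{K}Cf_{thres}+\mathcal{K}CL(lr)^2+2(lr)^2.$$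
   Context: SCSG epoch from snapshot $\tilde x$: $\tilde\mu=\nabla f(\tilde x)$, $x_0=\tilde x$, $N\sim\mathrm{Geom}(n/(n+b))$ ($P(N=j)=\frac b{n+b}(\frac n{n+b})^j$), for $t=1..N$: $x_t=x_{t-1}-\eta(\nabla f_{I_t}(x_{t-1})-\nabla f_{I_t}(\tilde x)+\tilde\mu)$ with $I_t$ a uniform random size-$b$ subset of $[n]$ and $\nabla f_I=\frac1{|I|}\sum_{i\in I}\nabla f_i$; next snapshot $x_N$. *)

theory Defs
  imports "HOL-Probability.Probability"
begin

definition batch_grad :: "(nat \<Rightarrow> 'a \<Rightarrow> 'a::real_vector) \<Rightarrow> nat set \<Rightarrow> 'a \<Rightarrow> 'a" where
  "batch_grad g I x = (1 / real (card I)) *\<^sub>R (\<Sum>i\<in>I. g i x)"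

definition batch_pmf :: "nat \<Rightarrow> nat \<Rightarrow> nat set pmf" where
  "batch_pmf n b = pmf_of_set {I. I \<subseteq> {1..n} \<and> card I = b}"

fun scsg_steps :: "(nat \<Rightarrow> 'a \<Rightarrow> 'a::real_vector) \<Rightarrow> nat \<Rightarrow> nat \<Rightarrow> real \<Rightarrow> 'a \<Rightarrow> nat \<Rightarrow> 'a \<Rightarrow> 'a pmf" where
  "scsg_steps g n b \<eta> xt 0 x = return_pmf x"
| "scsg_steps g n b \<eta> xt (Suc k) x =
     bind_pmf (batch_pmf n b)
       (\<lambda>I. scsg_steps g n b \<eta> xt k
              (x - \<eta> *\<^sub>R (batch_grad g I x - batch_grad g I xt + batch_grad g {1..n} xt)))"

text \<open>One SCSG epoch from snapshot xt: N ~ Geom, P(N=j) = b/(n+b) (n/(n+b))^j; output x_N.\<close>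
definition scsg_epoch :: "(nat \<Rightarrow> 'a \<Rightarrow> 'a::real_vector) \<Rightarrow> nat \<Rightarrow> nat \<Rightarrow> real \<Rightarrow> 'a \<Rightarrow> 'a pmf" where
  "scsg_epoch g n b \<eta> xt =
     bind_pmf (geometric_pmf (real b / (real n + real b))) (\<lambda>N. scsg_steps g n b \<eta> xt N xt)"

fun snapshots :: "(nat \<Rightarrow> 'a \<Rightarrow> 'a::real_vector) \<Rightarrow> nat \<Rightarrow> nat \<Rightarrow> real \<Rightarrow> real \<Rightarrow> 'a \<Rightarrow> nat \<Rightarrow> 'a pmf" where
  "snapshots g n b \<eta> r x0 0 = return_pmf x0"
| "snapshots g n b \<eta> r x0 (Suc 0) = map_pmf (\<lambda>i. x0 - r *\<^sub>R g i x0) (pmf_of_set {1..n})"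
| "snapshots g n b \<eta> r x0 (Suc (Suc k)) =
     bind_pmf (snapshots g n b \<eta> r x0 (Suc k)) (scsg_epoch g n b \<eta>)"

definition snapshot_pair :: "(nat \<Rightarrow> 'a \<Rightarrow> 'a::real_vector) \<Rightarrow> nat \<Rightarrow> nat \<Rightarrow> real \<Rightarrow> real \<Rightarrow> 'a \<Rightarrow> nat \<Rightarrow> ('a \<times> 'a) pmf" where
  "snapshot_pair g n b \<eta> r x0 k =
     bind_pmf (snapshots g n b \<eta> r x0 k) (\<lambda>x. map_pmf (\<lambda>y. (x, y)) (scsg_epoch g n b \<eta> x))"

definition scsg_C :: "real \<Rightarrow> real \<Rightarrow> real \<Rightarrow> real \<Rightarrow> real" where
  "scsg_C n b \<eta> L =
     b * inverse ((b - \<eta>^2 * L^2 * n / b - \<eta> * n) * (1 - \<eta> * L) / (1 + 2 * \<eta>)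
                  - L^3 * \<eta>^2 * n / (2 * b))"

end

theory Submission
  imports Defs
begin

text \<open>
  Write e k, D k and F k for the expectations of |x^k - x^0|^2, |x^(k+1) - x^k|^2 and f(x^k).
  Young's inequality gives e (k+1) <= (1 + t) e k + (1 + 1/t) D k for every t > 0; for a target
  index m + 1, taking t = 1/(m + k - 1) in step k makes the factors telescope to
  e (m+1) <= 2 e 1 + 2 m (D 1 + ... + D m).
  By the descent hypothesis the sum of the D j is at most C (F 1 - F K), and F 1 <= f(x^0) + L (l r)^2 / 2
  by the descent lemma for the initial stochastic gradient step, whose mean direction is the full
  gradient. The threshold hypothesis and e 1 <= (l r)^2 then give the bound.
  Integrability matters here, since the Bochner integral of a non-integrable function is 0; it holds
  because an inner SCSG step moves by at most 3 \<eta> l and the geometric epoch length has a finite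
  second moment.
\<close>

lemma descent_lemma:
  fixes F :: "'a::real_inner \<Rightarrow> real"
  assumes deriv: "\<And>x. (F has_derivative (\<lambda>h. G x \<bullet> h)) (at x)"
    and lip: "\<And>x y. norm (G x - G y) \<le> L * norm (x - y)"
  shows "F y \<le> F x + G x \<bullet> (y - x) + L / 2 * (norm (y - x))^2"
proof -
  define h where "h = y - x"
  define \<phi> where "\<phi> t = F (x + t *\<^sub>R h) - t * (G x \<bullet> h) - L / 2 * t^2 * (norm h)^2" for t
  have line: "((\<lambda>t. F (x + t *\<^sub>R h)) has_real_derivative G (x + t *\<^sub>R h) \<bullet> h) (at t)" for t
  proof -
    have "((\<lambda>t. F (x + t *\<^sub>R h)) has_derivative (\<lambda>s. G (x + t *\<^sub>R h) \<bullet> (s *\<^sub>R h))) (at t)"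
      by (rule has_derivative_compose[OF _ deriv]) (auto intro!: derivative_eq_intros)
    then show ?thesis
      by (simp add: has_field_derivative_def mult_commute_abs)
  qed
  have "\<phi> 1 \<le> \<phi> 0"
  proof (rule DERIV_nonpos_imp_nonincreasing[of 0 1])
    fix t :: real
    assume t: "0 \<le> t" "t \<le> 1"
    have "(G (x + t *\<^sub>R h) - G x) \<bullet> h \<le> norm (G (x + t *\<^sub>R h) - G x) * norm h"
      by (rule norm_cauchy_schwarz)
    also have "\<dots> \<le> L * t * norm h * norm h"
      using lip[of "x + t *\<^sub>R h" x] t by (intro mult_right_mono) (simp_all add: mult.assoc)
    also have "\<dots> = L * t * (norm h)^2"
      by (simp add: power2_eq_square)
    finally have "G (x + t *\<^sub>R h) \<bullet> h - G x \<bullet> h - L * t * (norm h)^2 \<le> 0"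
      by (simp add: inner_diff_left)
    moreover have "(\<phi> has_real_derivative G (x + t *\<^sub>R h) \<bullet> h - G x \<bullet> h - L * t * (norm h)^2) (at t)"
      unfolding \<phi>_def by (rule derivative_eq_intros line refl | simp)+
    ultimately show "\<exists>d. (\<phi> has_real_derivative d) (at t) \<and> d \<le> 0"
      by blast
  qed simp
  then show ?thesis
    by (simp add: \<phi>_def h_def)
qed

lemma descent_lemma_abs:
  fixes F :: "'a::real_inner \<Rightarrow> real"
  assumes "\<And>x. (F has_derivative (\<lambda>h. G x \<bullet> h)) (at x)"
    and "\<And>x y. norm (G x - G y) \<le> L * norm (x - y)"
  shows "\<bar>F y - F x - G x \<bullet> (y - x)\<bar> \<le> L / 2 * (norm (y - x))^2"
proof -
  have "(\<lambda>x. - F x) y \<le> - F x + (- G x) \<bullet> (y - x) + L / 2 * (norm (y - x))^2"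
  proof (rule descent_lemma)
    show "((\<lambda>x. - F x) has_derivative (\<lambda>h. - G x \<bullet> h)) (at x)" for x
      using has_derivative_minus[OF assms(1)[of x]] by simp
    show "norm (- G x - - G y) \<le> L * norm (x - y)" for x y
      using assms(2)[of x y] by (simp add: norm_minus_commute)
  qed
  with descent_lemma[OF assms, of y x] show ?thesis
    by (intro abs_leI) (simp_all add: inner_minus_left)
qed

lemma power2_norm_add_le:
  fixes a b :: "'a::real_normed_vector"
  assumes t: "t > 0"
  shows "(norm (a + b))^2 \<le> (1 + t) * (norm a)^2 + (1 + 1 / t) * (norm b)^2"
proof -
  have "0 \<le> (t * norm a - norm b)^2 / t"
    using t by simp
  then have young: "2 * norm a * norm b \<le> t * (norm a)^2 + (norm b)^2 / t"
    using t by (simp add: field_simps power2_eq_square)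
  have "(norm (a + b))^2 \<le> (norm a + norm b)^2"
    by (simp add: norm_triangle_ineq power_mono)
  also have "\<dots> \<le> (1 + t) * (norm a)^2 + (1 + 1 / t) * (norm b)^2"
    using young by (simp add: power2_sum algebra_simps)
  finally show ?thesis .
qed

lemma norm_average_le:
  fixes v :: "'i \<Rightarrow> 'a::real_normed_vector"
  assumes "finite I" "I \<noteq> {}" "\<And>i. i \<in> I \<Longrightarrow> norm (v i) \<le> c"
  shows "norm ((1 / real (card I)) *\<^sub>R (\<Sum>i\<in>I. v i)) \<le> c"
proof -
  have "norm (\<Sum>i\<in>I. v i) \<le> real (card I) * c"
    using norm_sum[of v I] sum_bounded_above[of I "\<lambda>i. norm (v i)" c] assms(3) by fastforce
  then show ?thesis
    using assms(1,2) by (simp add: card_gt_0_iff field_simps)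
qed

lemma young_recursion_bound:
  fixes e D :: "nat \<Rightarrow> real" and m :: nat
  assumes m: "m \<ge> 1"
    and step: "\<And>k t. 1 \<le> k \<Longrightarrow> t > 0 \<Longrightarrow> e (Suc k) \<le> (1 + t) * e k + (1 + 1 / t) * D k"
  shows "e (Suc m) \<le> 2 * e 1 + 2 * m * (\<Sum>j=1..m. D j)"
proof -
  define S where "S i = e 1 + m * (\<Sum>j=1..i. D j)" for i
  \<comment> \<open>step i uses t = 1/(m + i), so the factors telescope to (m + i)/m\<close>
  have "m * e (Suc i) \<le> (m + i) * S i" if "i \<le> m" for i
    using that
  proof (induction i)
    case 0
    then show ?case by (simp add: S_def)
  next
    case (Suc i)
    define a where "a = real m + real i"
    have a: "a > 0" using m by (simp add: a_def)
    have "m * e (Suc (Suc i)) \<le> m * ((1 + 1 / a) * e (Suc i) + (1 + a) * D (Suc i))"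
      using step[of "Suc i" "1 / a"] a by (simp add: mult_left_mono)
    also have "\<dots> = (a + 1) / a * (m * e (Suc i)) + (a + 1) * (m * D (Suc i))"
      using a by (simp add: field_simps)
    also have "\<dots> \<le> (a + 1) / a * (a * S i) + (a + 1) * (m * D (Suc i))"
      using Suc a by (intro add_mono mult_left_mono) (auto simp: a_def)
    also have "\<dots> = (a + 1) * (S i + m * D (Suc i))"
      using a by (simp add: field_simps)
    also have "\<dots> = (m + Suc i) * S (Suc i)"
      by (simp add: S_def a_def algebra_simps)
    finally show ?case .
  qed
  from this[of m] have "m * e (Suc m) \<le> m * (2 * S m)"
    by (simp add: algebra_simps)
  then have "e (Suc m) \<le> 2 * S m"
    using m by (simp add: mult_le_cancel_left_pos)
  then show ?thesis
    by (simp add: S_def algebra_simps)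
qed

lemma telescoped_descent_bound:
  fixes e D F :: "nat \<Rightarrow> real" and K :: nat and a C s :: real
  assumes e0: "e 0 = 0" and e1: "e 1 \<le> a" and a: "0 \<le> a"
    and step: "\<And>k t. 1 \<le> k \<Longrightarrow> t > 0 \<Longrightarrow> e (Suc k) \<le> (1 + t) * e k + (1 + 1 / t) * D k"
    and D: "\<And>k. 0 \<le> D k"
    and descent: "\<And>k. 1 \<le> k \<Longrightarrow> k < K \<Longrightarrow> D k \<le> C * (F k - F (Suc k))"
    and C: "0 < C" and s: "F 1 - F K \<le> s"
  shows "e K \<le> 2 * K * C * s + 2 * a"
proof (cases K)
  case 0
  then show ?thesis using e0 a by simp
next
  case (Suc m)
  have telescope: "(\<Sum>j=1..m. F j - F (Suc j)) = F 1 - F K"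
    unfolding Suc by (induction m) (simp_all add: sum.cl_ivl_Suc)
  have "(\<Sum>j=1..m. D j) \<le> (\<Sum>j=1..m. C * (F j - F (Suc j)))"
    using Suc by (intro sum_mono descent) auto
  also have "\<dots> = C * (F 1 - F K)"
    unfolding telescope[symmetric] by (simp add: sum_distrib_left)
  also have "\<dots> \<le> C * s"
    using C s by (intro mult_left_mono) auto
  finally have sum_D: "(\<Sum>j=1..m. D j) \<le> C * s" .
  moreover have sum_D_nonneg: "0 \<le> (\<Sum>j=1..m. D j)"
    using D by (simp add: sum_nonneg)
  ultimately have Cs: "0 \<le> C * s" by linarith
  show ?thesis
  proof (cases "m = 0")
    case True
    then show ?thesis using Suc e1 a Cs by simp
  next
    case False
    have "e K \<le> 2 * e 1 + 2 * m * (\<Sum>j=1..m. D j)"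
      using young_recursion_bound[of m e D] step False Suc by simp
    also have "\<dots> \<le> 2 * a + 2 * K * (C * s)"
      using e1 sum_D sum_D_nonneg Suc by (intro add_mono mult_left_mono mult_mono) auto
    finally show ?thesis by (simp add: algebra_simps)
  qed
qed

lemma summable_power2_times_geometric:
  fixes q :: real
  assumes "0 \<le> q" "q < 1"
  shows "summable (\<lambda>n. q ^ n * real n ^ 2)"
proof -
  define s where "s = sqrt q"
  have s: "0 \<le> s" "s < 1" and q: "q = s^2"
    using assms by (auto simp: s_def real_sqrt_lt_1_iff)
  \<comment> \<open>q^n n^2 is the product of two copies of n s^n: one bounded, the other summable\<close>
  have "Bseq (\<lambda>n. real n * s ^ n)"
    using powser_times_n_limit_0[of s] s by (auto intro: convergent_imp_Bseq convergentI)
  then obtain B where B: "\<And>n. norm (real n * s ^ n) \<le> B"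
    by (auto simp: Bseq_def)
  have "summable (\<lambda>n. s ^ n * real n)"
    using geometric_sums_times_n[of s] s by (auto simp: sums_iff)
  then show ?thesis
  proof (rule summable_comparison_test[OF _ summable_mult, rotated])
    have "norm (q ^ n * real n ^ 2) \<le> B * (s ^ n * real n)" for n
      using mult_right_mono[OF B[of n], of "s ^ n * real n"] s
      by (simp add: q power2_eq_square power_mult_distrib[symmetric] power_mult[symmetric] mult_ac)
    then show "\<exists>N. \<forall>n\<ge>N. norm (q ^ n * real n ^ 2) \<le> B * (s ^ n * real n)"
      by blast
  qed
qed

lemma integrable_geometric_pmf_power2:
  assumes "p \<in> {0<..1}"
  shows "integrable (geometric_pmf p) (\<lambda>N. real N ^ 2)"
proof -
  have "summable (\<lambda>N. p * ((1 - p) ^ N * real N ^ 2))"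
    using assms by (intro summable_mult summable_power2_times_geometric) auto
  then show ?thesis
    unfolding measure_pmf_eq_density using assms
    by (subst integrable_density) (auto simp: integrable_count_space_nat_iff mult_ac)
qed

lemma integrable_bind_pmf_power2_dist:
  fixes p :: "'a::real_normed_vector pmf" and K :: "'a \<Rightarrow> 'a pmf"
  assumes p: "integrable p (\<lambda>x. (norm (x - c))^2)"
    and K: "\<And>x. (\<integral>\<^sup>+y. ennreal ((norm (y - x))^2) \<partial>K x) \<le> A" and A: "A < \<infinity>"
  shows "integrable (bind_pmf p K) (\<lambda>y. (norm (y - c))^2)"
proof -
  have split: "ennreal ((norm (y - c))^2) \<le> 2 * ennreal ((norm (y - x))^2) + 2 * ennreal ((norm (x - c))^2)"
    for x y :: 'a
  proof -
    have "ennreal ((norm (y - c))^2) \<le> ennreal (2 * (norm (y - x))^2 + 2 * (norm (x - c))^2)"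
      using power2_norm_add_le[of 1 "y - x" "x - c"] by (intro ennreal_leI) simp
    then show ?thesis
      by (simp add: ennreal_plus ennreal_mult)
  qed
  have "(\<integral>\<^sup>+y. ennreal ((norm (y - c))^2) \<partial>bind_pmf p K)
      \<le> (\<integral>\<^sup>+x. 2 * A + 2 * ennreal ((norm (x - c))^2) \<partial>p)"
  proof (simp only: nn_integral_bind_pmf, rule nn_integral_mono)
    fix x
    have "(\<integral>\<^sup>+y. ennreal ((norm (y - c))^2) \<partial>K x)
        \<le> (\<integral>\<^sup>+y. 2 * ennreal ((norm (y - x))^2) + 2 * ennreal ((norm (x - c))^2) \<partial>K x)"
      by (rule nn_integral_mono) (rule split)
    also have "\<dots> \<le> 2 * A + 2 * ennreal ((norm (x - c))^2)"
      using K[of x]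
      by (simp add: nn_integral_add nn_integral_cmult measure_pmf.emeasure_space_1 add_mono mult_left_mono)
    finally show "(\<integral>\<^sup>+y. ennreal ((norm (y - c))^2) \<partial>K x) \<le> 2 * A + 2 * ennreal ((norm (x - c))^2)" .
  qed
  also have "\<dots> = 2 * A + 2 * (\<integral>\<^sup>+x. ennreal ((norm (x - c))^2) \<partial>p)"
    by (simp add: nn_integral_add nn_integral_cmult measure_pmf.emeasure_space_1)
  also have "\<dots> < \<infinity>"
    using A p by (simp add: integrable_iff_bounded ennreal_mult_less_top)
  finally show ?thesis
    by (simp add: integrable_iff_bounded)
qed

lemma set_pmf_batch_pmf:
  assumes "b \<le> n"
  shows "set_pmf (batch_pmf n b) = {I. I \<subseteq> {1..n} \<and> card I = b}"
proof -
  have "finite {I. I \<subseteq> {1..n} \<and> card I = b}"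
    by (rule finite_subset[of _ "Pow {1..n}"]) auto
  moreover have "{1..b} \<in> {I. I \<subseteq> {1..n} \<and> card I = b}"
    using assms by simp
  ultimately show ?thesis
    unfolding batch_pmf_def by (intro set_pmf_of_set) blast+
qed

lemma map_pmf_fst_snapshot_pair:
  "map_pmf fst (snapshot_pair g n b \<eta> r x0 k) = snapshots g n b \<eta> r x0 k"
  by (simp add: snapshot_pair_def map_bind_pmf map_pmf_comp bind_return_pmf')

lemma map_pmf_snd_snapshot_pair:
  "map_pmf snd (snapshot_pair g n b \<eta> r x0 (Suc k)) = snapshots g n b \<eta> r x0 (Suc (Suc k))"
  by (simp add: snapshot_pair_def map_bind_pmf map_pmf_comp)

locale scsg_problem =
  fixes fc :: "nat \<Rightarrow> 'a::euclidean_space \<Rightarrow> real" and g :: "nat \<Rightarrow> 'a \<Rightarrow> 'a" and f :: "'a \<Rightarrow> real"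
    and n b :: nat and L l \<eta> r :: real and x0 :: 'a
  assumes f_def: "\<And>x. f x = (1 / real n) * (\<Sum>z=1..n. fc z x)"
    and grad: "\<And>z x. z \<in> {1..n} \<Longrightarrow> (fc z has_derivative (\<lambda>h. g z x \<bullet> h)) (at x)"
    and lip: "\<And>z x y. z \<in> {1..n} \<Longrightarrow> norm (g z x - g z y) \<le> L * norm (x - y)"
    and bnd: "\<And>z x. z \<in> {1..n} \<Longrightarrow> norm (g z x) \<le> l"
    and b_pos: "1 \<le> b" and b_le_n: "b \<le> n" and eta_nonneg: "0 \<le> \<eta>"
begin

abbreviation snap :: "nat \<Rightarrow> 'a pmf" where
  "snap \<equiv> snapshots g n b \<eta> r x0"

abbreviation snap_pair :: "nat \<Rightarrow> ('a \<times> 'a) pmf" where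
  "snap_pair \<equiv> snapshot_pair g n b \<eta> r x0"

abbreviation full_grad :: "'a \<Rightarrow> 'a" where
  "full_grad \<equiv> batch_grad g {1..n}"

lemma n_pos: "n > 0"
  using b_pos b_le_n by simp

lemma l_nonneg: "0 \<le> l"
proof -
  have "1 \<in> {1..n}"
    using n_pos by simp
  then show ?thesis
    using bnd[of 1 x0] norm_ge_zero order_trans by blast
qed

lemma L_nonneg: "0 \<le> L"
proof -
  obtain u :: 'a where "u \<in> Basis"
    using nonempty_Basis by blast
  then have "norm (g 1 u - g 1 0) \<le> L"
    using lip[of 1 u 0] n_pos by simp
  then show ?thesis
    using norm_ge_zero order_trans by blast
qed

lemma norm_batch_grad_le:
  assumes "I \<subseteq> {1..n}" "I \<noteq> {}"
  shows "norm (batch_grad g I x) \<le> l"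
  unfolding batch_grad_def
  by (rule norm_average_le) (use assms bnd finite_subset[OF assms(1)] in auto)

lemma lipschitz_full_grad: "norm (full_grad x - full_grad y) \<le> L * norm (x - y)"
proof -
  have "full_grad x - full_grad y = (1 / real (card {1..n})) *\<^sub>R (\<Sum>i=1..n. g i x - g i y)"
    by (simp add: batch_grad_def scaleR_diff_right sum_subtractf)
  also have "norm \<dots> \<le> L * norm (x - y)"
    using n_pos lip by (intro norm_average_le) auto
  finally show ?thesis .
qed

lemma has_derivative_f: "(f has_derivative (\<lambda>h. full_grad x \<bullet> h)) (at x)"
proof -
  have "((\<lambda>y. (1 / real n) * (\<Sum>z=1..n. fc z y)) has_derivative (\<lambda>h. (1 / real n) * (\<Sum>z=1..n. g z x \<bullet> h))) (at x)"
    by (intro has_derivative_mult_right has_derivative_sum grad)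
  moreover have "(\<lambda>y. (1 / real n) * (\<Sum>z=1..n. fc z y)) = f"
    by (rule ext) (simp add: f_def)
  moreover have "(\<lambda>h. (1 / real n) * (\<Sum>z=1..n. g z x \<bullet> h)) = (\<lambda>h. full_grad x \<bullet> h)"
    by (simp add: batch_grad_def inner_sum_left)
  ultimately show ?thesis by simp
qed

lemma abs_f_diff_le: "\<bar>f y - f x\<bar> \<le> l * norm (y - x) + L / 2 * (norm (y - x))^2"
proof -
  have "\<bar>full_grad x \<bullet> (y - x)\<bar> \<le> l * norm (y - x)"
    using Cauchy_Schwarz_ineq2[of "full_grad x" "y - x"] norm_batch_grad_le[of "{1..n}" x] n_pos
    by (auto intro: order_trans[OF _ mult_right_mono[OF _ norm_ge_zero]])
  with descent_lemma_abs[OF has_derivative_f lipschitz_full_grad, of y x] show ?thesis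
    by linarith
qed

lemma scsg_steps_dist_le:
  "y \<in> set_pmf (scsg_steps g n b \<eta> xt N x) \<Longrightarrow> norm (y - x) \<le> N * (3 * \<eta> * l)"
proof (induction N arbitrary: x)
  case 0
  then show ?case by simp
next
  case (Suc N)
  then obtain I where I: "I \<subseteq> {1..n}" "card I = b"
    and y: "y \<in> set_pmf (scsg_steps g n b \<eta> xt N
              (x - \<eta> *\<^sub>R (batch_grad g I x - batch_grad g I xt + full_grad xt)))"
    using set_pmf_batch_pmf[OF b_le_n] by auto
  define v where "v = batch_grad g I x - batch_grad g I xt + full_grad xt"
  have "I \<noteq> {}" using I b_pos by auto
  then have "norm v \<le> l + l + l"
    unfolding v_def using I norm_batch_grad_le n_pos
    by (intro norm_triangle_le norm_triangle_le_diff add_mono) auto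
  then have "\<eta> * norm v \<le> \<eta> * (3 * l)"
    by (intro mult_left_mono eta_nonneg) simp
  then have "norm ((x - \<eta> *\<^sub>R v) - x) \<le> 3 * \<eta> * l"
    using eta_nonneg by simp
  with Suc.IH y have "norm (y - x) \<le> N * (3 * \<eta> * l) + 3 * \<eta> * l"
    unfolding v_def by (blast intro: norm_diff_triangle_le)
  then show ?case
    by (simp add: algebra_simps)
qed

lemma nn_integral_scsg_epoch_power2_dist_le:
  "(\<integral>\<^sup>+y. ennreal ((norm (y - xt))^2) \<partial>scsg_epoch g n b \<eta> xt)
     \<le> ennreal ((3 * \<eta> * l)^2 * measure_pmf.expectation (geometric_pmf (real b / (real n + real b))) (\<lambda>N. real N ^ 2))"
proof -
  define G where "G = geometric_pmf (real b / (real n + real b))"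
  have "(\<integral>\<^sup>+y. ennreal ((norm (y - xt))^2) \<partial>scsg_epoch g n b \<eta> xt)
      \<le> (\<integral>\<^sup>+N. ennreal ((3 * \<eta> * l)^2 * real N ^ 2) \<partial>G)"
    unfolding scsg_epoch_def nn_integral_bind_pmf G_def
  proof (rule nn_integral_mono)
    fix N
    have "(\<integral>\<^sup>+y. ennreal ((norm (y - xt))^2) \<partial>scsg_steps g n b \<eta> xt N xt)
        \<le> (\<integral>\<^sup>+y. ennreal ((3 * \<eta> * l)^2 * real N ^ 2) \<partial>scsg_steps g n b \<eta> xt N xt)"
    proof (rule nn_integral_mono_AE, unfold AE_measure_pmf_iff, intro ballI ennreal_leI)
      fix y
      assume "y \<in> set_pmf (scsg_steps g n b \<eta> xt N xt)"
      then have "(norm (y - xt))^2 \<le> (N * (3 * \<eta> * l))^2"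
        using scsg_steps_dist_le by (intro power_mono) auto
      then show "(norm (y - xt))^2 \<le> (3 * \<eta> * l)^2 * real N ^ 2"
        by (simp add: power_mult_distrib mult_ac)
    qed
    then show "(\<integral>\<^sup>+y. ennreal ((norm (y - xt))^2) \<partial>scsg_steps g n b \<eta> xt N xt)
        \<le> ennreal ((3 * \<eta> * l)^2 * real N ^ 2)"
      by (simp add: measure_pmf.emeasure_space_1)
  qed
  also have "\<dots> = ennreal (measure_pmf.expectation G (\<lambda>N. (3 * \<eta> * l)^2 * real N ^ 2))"
    using b_pos unfolding G_def
    by (intro nn_integral_eq_integral integrable_mult_right integrable_geometric_pmf_power2) auto
  finally show ?thesis
    by (simp add: G_def)
qed

lemma integrable_snapshots_power2_dist: "integrable (snap k) (\<lambda>x. (norm (x - x0))^2)"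
proof (induction k rule: induct_nat_012)
  case 0
  show ?case
    by (simp add: integrable_measure_pmf_finite)
next
  case 1
  show ?case
    using n_pos by (simp add: integrable_measure_pmf_finite)
next
  case (ge2 k)
  show ?case
    using integrable_bind_pmf_power2_dist[OF ge2(2) nn_integral_scsg_epoch_power2_dist_le] by simp
qed

lemma integrable_snapshots_f: "integrable (snap k) f"
proof (rule Bochner_Integration.integrable_bound)
  show "integrable (snap k) (\<lambda>x. (\<bar>f x0\<bar> + l) + (l + L / 2) * (norm (x - x0))^2)"
    using integrable_snapshots_power2_dist by simp
  show "AE x in snap k. norm (f x) \<le> norm ((\<bar>f x0\<bar> + l) + (l + L / 2) * (norm (x - x0))^2)"
  proof (rule AE_I2)
    fix x
    have "0 \<le> (norm (x - x0) - 1)^2"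
      by simp
    then have "2 * norm (x - x0) \<le> 1 + (norm (x - x0))^2"
      by (simp add: power2_diff)
    then have "norm (x - x0) \<le> 1 + (norm (x - x0))^2"
      using norm_ge_zero[of "x - x0"] by linarith
    then have "\<bar>f x\<bar> \<le> \<bar>f x0\<bar> + l * (1 + (norm (x - x0))^2) + L / 2 * (norm (x - x0))^2"
      using abs_f_diff_le[of x x0] mult_left_mono[OF _ l_nonneg] by fastforce
    then show "norm (f x) \<le> norm ((\<bar>f x0\<bar> + l) + (l + L / 2) * (norm (x - x0))^2)"
      using l_nonneg L_nonneg by (simp add: algebra_simps)
  qed
qed simp

lemma expectation_snapshot_pair_fst:
  fixes h :: "'a \<Rightarrow> real"
  shows "measure_pmf.expectation (snap_pair k) (\<lambda>(x, y). h x) = measure_pmf.expectation (snap k) h"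
  using integral_map_pmf[of fst "snap_pair k" h] by (simp add: map_pmf_fst_snapshot_pair case_prod_unfold)

lemma integrable_snapshot_pair_fst:
  fixes h :: "'a \<Rightarrow> real"
  shows "integrable (snap k) h \<Longrightarrow> integrable (snap_pair k) (\<lambda>(x, y). h x)"
  using integrable_map_pmf_eq[of fst "snap_pair k" h] by (simp add: map_pmf_fst_snapshot_pair case_prod_unfold)

lemma integrable_snapshot_pair_snd:
  fixes h :: "'a \<Rightarrow> real"
  shows "integrable (snap (Suc (Suc k))) h \<Longrightarrow> integrable (snap_pair (Suc k)) (\<lambda>(x, y). h y)"
  using integrable_map_pmf_eq[of snd "snap_pair (Suc k)" h] by (simp add: map_pmf_snd_snapshot_pair case_prod_unfold)

lemma expectation_snapshot_pair_snd:
  fixes h :: "'a \<Rightarrow> real"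
  shows "measure_pmf.expectation (snap_pair (Suc k)) (\<lambda>(x, y). h y) = measure_pmf.expectation (snap (Suc (Suc k))) h"
  using integral_map_pmf[of snd "snap_pair (Suc k)" h] by (simp add: map_pmf_snd_snapshot_pair case_prod_unfold)

lemma expectation_snapshots_Suc_power2_dist_le:
  assumes "1 \<le> k" "0 < t"
  shows "measure_pmf.expectation (snap (Suc k)) (\<lambda>x. (norm (x - x0))^2)
    \<le> (1 + t) * measure_pmf.expectation (snap k) (\<lambda>x. (norm (x - x0))^2)
      + (1 + 1 / t) * measure_pmf.expectation (snap_pair k) (\<lambda>(x, y). (norm (y - x))^2)"
proof -
  obtain j where k: "k = Suc j"
    using assms(1) by (cases k) auto
  have fst: "integrable (snap_pair k) (\<lambda>(x, y). (norm (x - x0))^2)"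
    by (rule integrable_snapshot_pair_fst[OF integrable_snapshots_power2_dist])
  have snd: "integrable (snap_pair k) (\<lambda>(x, y). (norm (y - x0))^2)"
    unfolding k by (rule integrable_snapshot_pair_snd[OF integrable_snapshots_power2_dist])
  have step: "(norm (y - x0))^2 \<le> (1 + t) * (norm (x - x0))^2 + (1 + 1 / t) * (norm (y - x))^2" for x y
    using power2_norm_add_le[OF assms(2), of "x - x0" "y - x"] by simp
  have diff: "integrable (snap_pair k) (\<lambda>(x, y). (norm (y - x))^2)"
  proof (rule Bochner_Integration.integrable_bound)
    show "integrable (snap_pair k) (\<lambda>(x, y). 2 * (norm (y - x0))^2 + 2 * (norm (x - x0))^2)"
      using fst snd by (simp add: case_prod_unfold)
    have "(norm (y - x))^2 \<le> 2 * (norm (y - x0))^2 + 2 * (norm (x - x0))^2" for x y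
      using power2_norm_add_le[of 1 "y - x0" "x0 - x"] by (simp add: norm_minus_commute)
    then show "AE p in snap_pair k. norm ((\<lambda>(x, y). (norm (y - x))^2) p)
        \<le> norm ((\<lambda>(x, y). 2 * (norm (y - x0))^2 + 2 * (norm (x - x0))^2) p)"
      by (intro AE_I2) (auto split: prod.split)
  qed (simp add: case_prod_unfold)
  have "measure_pmf.expectation (snap (Suc k)) (\<lambda>x. (norm (x - x0))^2)
      = measure_pmf.expectation (snap_pair k) (\<lambda>(x, y). (norm (y - x0))^2)"
    unfolding k by (rule expectation_snapshot_pair_snd[symmetric])
  also have "\<dots> \<le> measure_pmf.expectation (snap_pair k)
      (\<lambda>(x, y). (1 + t) * (norm (x - x0))^2 + (1 + 1 / t) * (norm (y - x))^2)"
    using fst diff snd step by (intro integral_mono) (auto simp: case_prod_unfold)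
  also have "\<dots> = (1 + t) * measure_pmf.expectation (snap k) (\<lambda>x. (norm (x - x0))^2)
      + (1 + 1 / t) * measure_pmf.expectation (snap_pair k) (\<lambda>(x, y). (norm (y - x))^2)"
    using fst diff
    by (simp add: case_prod_unfold expectation_snapshot_pair_fst[symmetric, unfolded case_prod_unfold])
  finally show ?thesis .
qed

lemma expectation_snapshot_pair_f_diff:
  "measure_pmf.expectation (snap_pair (Suc k)) (\<lambda>(x, y). f x - f y)
    = measure_pmf.expectation (snap (Suc k)) f - measure_pmf.expectation (snap (Suc (Suc k))) f"
  using integrable_snapshot_pair_fst[OF integrable_snapshots_f, of "Suc k"]
    integrable_snapshot_pair_snd[OF integrable_snapshots_f, of k]
    expectation_snapshot_pair_fst[of "Suc k" f] expectation_snapshot_pair_snd[of k f]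
  by (simp add: case_prod_unfold)

lemma power2_norm_first_step_le:
  assumes "i \<in> {1..n}"
  shows "(norm (r *\<^sub>R g i x0))^2 \<le> (l * r)^2"
proof -
  have "\<bar>r\<bar> * norm (g i x0) \<le> \<bar>r\<bar> * l"
    using bnd[OF assms] by (intro mult_left_mono) simp_all
  then have "(norm (r *\<^sub>R g i x0))^2 \<le> (\<bar>r\<bar> * l)^2"
    by (intro power_mono) simp_all
  then show ?thesis
    by (simp add: power_mult_distrib mult.commute)
qed

lemma expectation_snapshots_1_power2_dist_le:
  "measure_pmf.expectation (snap 1) (\<lambda>x. (norm (x - x0))^2) \<le> (l * r)^2"
proof (rule measure_pmf.integral_le_const)
  show "integrable (snap 1) (\<lambda>x. (norm (x - x0))^2)"
    by (rule integrable_snapshots_power2_dist)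
  from power2_norm_first_step_le show "AE x in snap 1. (norm (x - x0))^2 \<le> (l * r)^2"
    using n_pos by (auto simp: AE_measure_pmf_iff)
qed

lemma expectation_snapshots_1_f_le:
  assumes "0 \<le> r"
  shows "measure_pmf.expectation (snap 1) f \<le> f x0 + L / 2 * (l * r)^2"
proof -
  define G where "G = full_grad x0"
  have "(\<Sum>i=1..n. g i x0) = real n *\<^sub>R G"
    using n_pos by (simp add: G_def batch_grad_def)
  then have sum_inner: "(\<Sum>i=1..n. G \<bullet> g i x0) = real n * (G \<bullet> G)"
    by (simp add: inner_sum_right[symmetric])
  \<comment> \<open>averaged over i, the first-order terms of the descent lemma sum to - r n |G|^2 \<le> 0\<close>
  have "f (x0 - r *\<^sub>R g i x0) \<le> f x0 - r * (G \<bullet> g i x0) + L / 2 * (l * r)^2" if "i \<in> {1..n}" for i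
  proof -
    have "L / 2 * (norm (r *\<^sub>R g i x0))^2 \<le> L / 2 * (l * r)^2"
      using power2_norm_first_step_le[OF that] L_nonneg by (simp add: mult_left_mono)
    with descent_lemma[OF has_derivative_f lipschitz_full_grad, of "x0 - r *\<^sub>R g i x0" x0] show ?thesis
      by (simp add: G_def)
  qed
  then have "(\<Sum>i=1..n. f (x0 - r *\<^sub>R g i x0))
      \<le> (\<Sum>i=1..n. f x0 - r * (G \<bullet> g i x0) + L / 2 * (l * r)^2)"
    by (rule sum_mono)
  also have "\<dots> = real n * (f x0 + L / 2 * (l * r)^2) - r * (\<Sum>i=1..n. G \<bullet> g i x0)"
    by (simp add: sum.distrib sum_subtractf sum_distrib_left algebra_simps)
  also have "\<dots> = real n * (f x0 + L / 2 * (l * r)^2) - real n * r * (G \<bullet> G)"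
    unfolding sum_inner by simp
  also have "\<dots> \<le> real n * (f x0 + L / 2 * (l * r)^2)"
    using assms by simp
  finally show ?thesis
    using n_pos by (simp add: integral_pmf_of_set divide_le_eq mult.commute)
qed

end

theorem lemma26:
  fixes fc :: "nat \<Rightarrow> 'a::euclidean_space \<Rightarrow> real"
    and g :: "nat \<Rightarrow> 'a \<Rightarrow> 'a"
    and f :: "'a \<Rightarrow> real"
    and n b K :: nat and L l \<eta> r fthres :: real and x0 :: 'a
  assumes f_def: "\<And>x. f x = (1 / real n) * (\<Sum>z=1..n. fc z x)"
    and grad: "\<And>z x. z \<in> {1..n} \<Longrightarrow> (fc z has_derivative (\<lambda>h. g z x \<bullet> h)) (at x)"
    and lip: "\<And>z x y. z \<in> {1..n} \<Longrightarrow> norm (g z x - g z y) \<le> L * norm (x - y)"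
    and bnd: "\<And>z x. z \<in> {1..n} \<Longrightarrow> norm (g z x) \<le> l"
    and b1: "b \<ge> 1" and nb: "n \<ge> 8 * b"
    and eta: "\<eta> > 0" and r: "r > 0"
    and Cpos: "scsg_C n b \<eta> L > 0"
    and descent: "\<And>k. 1 \<le> k \<Longrightarrow> k < K \<Longrightarrow>
         measure_pmf.expectation (snapshot_pair g n b \<eta> r x0 k) (\<lambda>(x, y). (norm (y - x))^2)
         \<le> scsg_C n b \<eta> L * measure_pmf.expectation (snapshot_pair g n b \<eta> r x0 k) (\<lambda>(x, y). f x - f y)"
    and thres: "measure_pmf.expectation (snapshots g n b \<eta> r x0 K) f - f x0 \<ge> - fthres"
  shows "measure_pmf.expectation (snapshots g n b \<eta> r x0 K) (\<lambda>x. (norm (x - x0))^2)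
         \<le> 2 * K * scsg_C n b \<eta> L * fthres + K * scsg_C n b \<eta> L * L * (l * r)^2 + 2 * (l * r)^2"
proof -
  interpret scsg_problem fc g f n b L l \<eta> r x0
    using f_def grad lip bnd b1 nb eta by unfold_locales auto
  define e where "e k = measure_pmf.expectation (snap k) (\<lambda>x. (norm (x - x0))^2)" for k
  define D where "D k = measure_pmf.expectation (snap_pair k) (\<lambda>(x, y). (norm (y - x))^2)" for k
  define F where "F k = measure_pmf.expectation (snap k) f" for k
  have "e K \<le> 2 * K * scsg_C n b \<eta> L * (fthres + L / 2 * (l * r)^2) + 2 * (l * r)^2"
  proof (rule telescoped_descent_bound[where D = D and F = F])
    show "e 0 = 0" "e 1 \<le> (l * r)^2" "0 \<le> (l * r)^2"
      using expectation_snapshots_1_power2_dist_le by (simp_all add: e_def)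
    show "e (Suc k) \<le> (1 + t) * e k + (1 + 1 / t) * D k" if "1 \<le> k" "0 < t" for k t
      using expectation_snapshots_Suc_power2_dist_le[OF that] by (simp add: e_def D_def)
    show "0 \<le> D k" for k
      unfolding D_def by (rule Bochner_Integration.integral_nonneg) (simp add: case_prod_unfold)
    show "D k \<le> scsg_C n b \<eta> L * (F k - F (Suc k))" if "1 \<le> k" "k < K" for k
      using descent[OF that] expectation_snapshot_pair_f_diff[of "k - 1"] that by (simp add: D_def F_def)
    show "F 1 - F K \<le> fthres + L / 2 * (l * r)^2"
      using thres expectation_snapshots_1_f_le r by (simp add: F_def)
  qed (rule Cpos)
  then show ?thesis
    by (simp add: e_def algebra_simps)
qed

end
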